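(* Let $L\geq 2$, ${\bf A}\in\mathbb{R}^{M\times N}$ and ${\bf y}\in\mathbb{R}^{M}$. Define the overparameterized loss function $\mathcal{L}_{\text{over}}$ as \begin{equation} \mathcal{L}_{\text{over}}\big({\bf x}^{(1)}, \dots, {\bf x}^{(L)}\big) := \frac{1}{2}\,\|{\bf A}\tilde{\bf x}-{\bf y}\|_2^2 \end{equation} where $\tilde{\bf x} = {\bf x}^{(1)}\odot \cdots\odot {\bf x}^{(L)}$. Let ${\bf x}_0 > \boldsymbol{0}$ be fixed and, for any $k$, let ${\bf x}^{(k)}(t)$ follow the flow $\big({\bf x}^{(k)}\big)'(t) = -\nabla_{{\bf x}^{(k)}} \mathcal{L}_{\text{over}}$ with ${\bf x}^{(k)}(0) = {\bf x}_0$. Let $S_+ := \operatorname{argmin}_{{\bf z} \ge \boldsymbol{0}} \| {\bf A}{\bf z} - {\bf y} \|_2^2$ be the set of solutions of the non-negative least squares problem. Then the limit $\tilde{\bf x}_\infty:= \lim_{t\to\infty} \tilde{\bf x}(t)$ exists and lies in $S_+$. Moreover, for ${\bf y}_+ := {\bf A}{\bf x}_+$ with ${\bf x}_+ \in S_+$, there exists an absolute constant $C > 0$ that only depends on the choice of ${\bf A}$, ${\bf y}$, and ${\bf x}_0$ such that \begin{align*} \| {\bf A} \tilde{\bf x}(t) - {\bf y}_+ \|_2^2 \le \frac{C}{t}, \end{align*} for any $t > 0$.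
   Context: $\odot$ denotes the Hadamard (entry-wise) product. ${\bf y}_+ = {\bf A}{\bf x}_+$ does not depend on the choice of ${\bf x}_+ \in S_+$: it is the unique Euclidean projection of ${\bf y}$ onto the closed convex set $C_+ := \{ {\bf A}{\bf z} \colon {\bf z} \ge \boldsymbol{0} \}$. Inequalities between vectors are entry-wise. *)

theory Defs
  imports "HOL-Analysis.Analysis"
begin

definition hadamard_prod :: "nat \<Rightarrow> (nat \<Rightarrow> real^'n) \<Rightarrow> real^'n" where
  "hadamard_prod L X = (\<chi> i. \<Prod>k\<in>{1..L}. X k $ i)"

definition L_over :: "nat \<Rightarrow> real^'n^'m \<Rightarrow> real^'m \<Rightarrow> (nat \<Rightarrow> real^'n) \<Rightarrow> real" where
  "L_over L A y X = (1/2) * (norm (A *v hadamard_prod L X - y))\<^sup>2"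

definition NNLS_sol :: "real^'n^'m \<Rightarrow> real^'m \<Rightarrow> (real^'n) set" where
  "NNLS_sol A y = {z. (\<forall>i. 0 \<le> z $ i) \<and>
      (\<forall>w. (\<forall>i. 0 \<le> w $ i) \<longrightarrow> (norm (A *v z - y))\<^sup>2 \<le> (norm (A *v w - y))\<^sup>2)}"

end

(*
  All factors start at x0, and d/dt (x^(k)_i)^2 = -2 x~_i (A^T (A x~ - y))_i does not depend on k,
  so the factors coincide for all time, x^(k)(t) = u(t); a Gronwall estimate keeps u in the open
  positive orthant. Thus x~ = u^L and u' = - u^(L-1) (.) A^T (A u^L - y).
  For z >= 0 the potential D_z = sum_i phi_(z_i)(u_i), where phi_c(w) = w^2/2 - c psi(w) and
  psi' = w^(1-L), satisfies D_z' = <A^T (A x~ - y), z - x~> <= (F(z) - F(x~))/2 by convexity of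
  F(x) = ||A x - y||^2. Since F(x~(t)) is nonincreasing, t (F(x~(t)) - F(z)) + 2 D_z(t) is
  nonincreasing as well, so F(x~(t)) - min F = O(1/t); the variational inequality of non-negative
  least squares turns this into the bound on ||A x~(t) - y_+||^2.
  D_z also keeps u bounded. If u(t_n) -> u_inf along some t_n -> oo, then u_inf^L lies in S_+, and
  D centred at u_inf^L is nonincreasing, tends to its infimum along t_n and exceeds that infimum by
  at least ||u(t) - u_inf||^2 / 2; hence u(t) -> u_inf.
*)
theory Submission
  imports Defs
begin

lemma gderiv_unique:
  assumes "GDERIV f x :> g" and "GDERIV f x :> g'"
  shows "g = g'"
proof -
  have "(\<lambda>h. h \<bullet> g) = (\<lambda>h. h \<bullet> g')"
    using has_derivative_unique assms unfolding gderiv_def by blast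
  then show ?thesis by (metis vector_eq_ldot)
qed

lemma gderiv_least_squares:
  fixes B :: "real^'n^'m"
  shows "GDERIV (\<lambda>z. (1/2) * (norm (B *v z - y))\<^sup>2) x :> transpose B *v (B *v x - y)"
proof -
  have "((\<lambda>z. (1/2) * ((B *v z - y) \<bullet> (B *v z - y))) has_derivative
      (\<lambda>h. (1/2) * ((B *v h) \<bullet> (B *v x - y) + (B *v x - y) \<bullet> (B *v h)))) (at x)"
    by (auto intro!: derivative_eq_intros bounded_linear.has_derivative[OF matrix_vector_mul_bounded_linear])
  moreover have "(1/2) * ((B *v h) \<bullet> (B *v x - y) + (B *v x - y) \<bullet> (B *v h)) = h \<bullet> (transpose B *v (B *v x - y))" for h
    using dot_lmul_matrix[of "B *v x - y" B h]
    by (simp add: inner_commute)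
  ultimately show ?thesis
    by (simp add: gderiv_def power2_norm_eq_inner)
qed

lemma has_vector_derivative_vec_nth:
  fixes f :: "real \<Rightarrow> real^'n"
  assumes "(f has_vector_derivative v) F"
  shows "((\<lambda>t. f t $ i) has_real_derivative v $ i) F"
  using bounded_linear.has_derivative[OF bounded_linear_vec_nth[of i] assms[unfolded has_vector_derivative_def]]
  by (simp add: has_field_derivative_def mult.commute[of _ "v $ i"])

lemma has_vector_derivative_componentwise:
  fixes f :: "real \<Rightarrow> real^'n"
  assumes "\<And>i. ((\<lambda>t. f t $ i) has_real_derivative f' $ i) (at t within S)"
  shows "(f has_vector_derivative f') (at t within S)"
  unfolding has_vector_derivative_def
proof (subst has_derivative_componentwise_within, intro ballI)
  fix b :: "real^'n" assume "b \<in> Basis"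
  then obtain i where b: "b = axis i 1" by (auto simp: Basis_vec_def)
  show "((\<lambda>x. f x \<bullet> b) has_derivative (\<lambda>x. (x *\<^sub>R f') \<bullet> b)) (at t within S)"
    using assms[of i] unfolding b has_field_derivative_def
    by (simp add: inner_axis mult.commute[of _ "f' $ i"])
qed

lemma DERIV_nonpos_imp_nonincreasing_within_halfline:
  fixes h h' :: "real \<Rightarrow> real"
  assumes "\<And>t. 0 \<le> t \<Longrightarrow> (h has_real_derivative h' t) (at t within {0..})"
    and "\<And>t. a < t \<Longrightarrow> t < b \<Longrightarrow> h' t \<le> 0" and "0 \<le> a" and "a \<le> b"
  shows "h b \<le> h a"
proof (rule DERIV_nonpos_imp_decreasing_open[OF \<open>a \<le> b\<close>])
  fix t assume "a < t" "t < b"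
  moreover have "at t within {0..} = at t"
    using \<open>0 \<le> a\<close> \<open>a < t\<close> by (intro at_within_interior) auto
  ultimately show "\<exists>y. (h has_real_derivative y) (at t) \<and> y \<le> 0"
    using assms(1,2,3) by (metis less_le_not_le order_trans)
next
  have "continuous_on {0..} h"
    using assms(1) by (intro DERIV_continuous_on) auto
  then show "continuous_on {a..b} h"
    by (rule continuous_on_subset) (use \<open>0 \<le> a\<close> in auto)
qed

lemma nonzero_if_abs_deriv_le:
  fixes v v' :: "real \<Rightarrow> real"
  assumes deriv: "\<And>s. 0 \<le> s \<Longrightarrow> (v has_real_derivative v' s) (at s within {0..})"
    and bound: "\<And>s. 0 \<le> s \<Longrightarrow> s \<le> T \<Longrightarrow> \<bar>v' s\<bar> \<le> K * \<bar>v s\<bar>"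
    and "v 0 \<noteq> 0" and "0 \<le> T"
  shows "v T \<noteq> 0"
proof -
  \<comment> \<open>Gronwall: v(s)^2 exp(2 K s) is nondecreasing.\<close>
  define w where "w s = - ((v s)\<^sup>2 * exp (2 * K * s))" for s
  define w' where "w' s = - (2 * exp (2 * K * s) * (v s * v' s + K * (v s)\<^sup>2))" for s
  have d: "((\<lambda>s. (v s)\<^sup>2 * exp (2 * K * s)) has_real_derivative
      2 * v s * v' s * exp (2 * K * s) + (v s)\<^sup>2 * (exp (2 * K * s) * (2 * K))) (at s within {0..})"
    if "0 \<le> s" for s
    using deriv[OF that] by (auto intro!: derivative_eq_intros)
  then have "(w has_real_derivative w' s) (at s within {0..})" if "0 \<le> s" for s
    unfolding w_def w'_def using DERIV_minus[OF d[OF that]] by (simp add: algebra_simps)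
  moreover have "w' s \<le> 0" if "0 < s" "s < T" for s
  proof -
    have "- (v s * v' s) \<le> \<bar>v s\<bar> * \<bar>v' s\<bar>" using abs_ge_minus_self[of "v s * v' s"] by (simp add: abs_mult)
    also have "\<dots> \<le> \<bar>v s\<bar> * (K * \<bar>v s\<bar>)" using that by (intro mult_left_mono bound) auto
    also have "\<dots> = K * (\<bar>v s\<bar> * \<bar>v s\<bar>)" by (simp only: mult.left_commute)
    also have "\<dots> = K * (v s)\<^sup>2" by (simp only: abs_mult_self_eq power2_eq_square)
    finally have "0 \<le> v s * v' s + K * (v s)\<^sup>2" by simp
    then show ?thesis by (simp add: w'_def)
  qed
  ultimately have "w T \<le> w 0"
    by (rule DERIV_nonpos_imp_nonincreasing_within_halfline) (use \<open>0 \<le> T\<close> in auto)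
  then show ?thesis using \<open>v 0 \<noteq> 0\<close> by (auto simp: w_def)
qed

lemma tendsto_at_top_if_nonincreasing_subseq:
  fixes h :: "real \<Rightarrow> real"
  assumes mono: "\<And>a b. 0 \<le> a \<Longrightarrow> a \<le> b \<Longrightarrow> h b \<le> h a"
    and lower: "\<And>t. 0 \<le> t \<Longrightarrow> l \<le> h t"
    and s: "filterlim s at_top sequentially" and lim: "(\<lambda>n. h (s n)) \<longlonglongrightarrow> l"
  shows "(h \<longlongrightarrow> l) at_top"
proof (rule order_tendstoI)
  fix a assume "a < l"
  then have "a < h t" if "0 \<le> t" for t
    using lower[OF that] by linarith
  then show "\<forall>\<^sub>F t in at_top. a < h t"
    by (simp add: eventually_at_top_linorder) blast
next
  fix a assume "l < a"
  have "\<forall>\<^sub>F n in sequentially. h (s n) < a"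
    using order_tendstoD(2)[OF lim \<open>l < a\<close>] .
  moreover have "\<forall>\<^sub>F n in sequentially. 0 \<le> s n"
    using s by (simp add: filterlim_at_top)
  ultimately obtain n where n: "h (s n) < a" "0 \<le> s n"
    using eventually_happens'[OF sequentially_bot eventually_conj] by blast
  then have "h t < a" if "s n \<le> t" for t
    using mono[OF n(2) that] by linarith
  then show "\<forall>\<^sub>F t in at_top. h t < a"
    by (simp add: eventually_at_top_linorder) blast
qed

section \<open>The potential\<close>

text \<open>\<open>psi L\<close> is an antiderivative of w^(1-L) on w > 0, and the potential \<open>phi L c\<close> is
  minimal at w = c^(1/L).\<close>

definition psi :: "nat \<Rightarrow> real \<Rightarrow> real" where
  "psi L w = (if L = 2 then ln w else - 1 / ((real L - 2) * w ^ (L - 2)))"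

definition phi :: "nat \<Rightarrow> real \<Rightarrow> real \<Rightarrow> real" where
  "phi L c w = w\<^sup>2 / 2 - c * psi L w"

lemma psi_deriv:
  assumes "L \<ge> 2" "w > 0"
  shows "(psi L has_real_derivative 1 / w ^ (L - 1)) (at w)"
proof (cases "L = 2")
  case True
  then have "psi L = ln" by (simp add: psi_def fun_eq_iff)
  then show ?thesis
    using True DERIV_ln[OF \<open>w > 0\<close>] by (simp add: divide_inverse)
next
  case False
  define m where "m = L - 3"
  have m: "L = m + 3" using False assms(1) by (simp add: m_def)
  have psi_eq: "psi L = (\<lambda>w. - (1 / (real m + 1)) * inverse (w ^ (m + 1)))"
    using m by (simp add: psi_def fun_eq_iff field_simps)
  have pow: "(w ^ (m + 1)) ^ Suc (Suc 0) = w ^ m * w ^ (L - 1)"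
    using m by (simp flip: power_add power_mult add: algebra_simps)
  have "((\<lambda>w. - (1 / (real m + 1)) * inverse (w ^ (m + 1))) has_real_derivative
      - (1 / (real m + 1)) * - (real (m + 1) * w ^ (m + 1 - Suc 0) * inverse ((w ^ (m + 1)) ^ Suc (Suc 0)))) (at w)"
    using \<open>w > 0\<close> by (intro DERIV_cmult DERIV_inverse_fun DERIV_pow) simp
  moreover have "- (1 / (real m + 1)) * - (real (m + 1) * w ^ (m + 1 - Suc 0) * inverse ((w ^ (m + 1)) ^ Suc (Suc 0)))
      = 1 / w ^ (L - 1)"
    using \<open>w > 0\<close> pow by (simp add: divide_simps del: power_Suc)
  ultimately show ?thesis by (simp only: psi_eq)
qed

lemma phi_deriv:
  assumes "L \<ge> 2" "w > 0"
  shows "(phi L c has_real_derivative w - c / w ^ (L - 1)) (at w)"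
  unfolding phi_def[abs_def]
  by (auto intro!: derivative_eq_intros psi_deriv[OF assms])

lemma phi_lower_bound:
  assumes "L \<ge> 2" "w > 0" "c \<ge> 0"
  shows "w\<^sup>2 / 2 - c * w \<le> phi L c w"
proof -
  have "psi L w \<le> w"
  proof (cases "L = 2")
    case True
    then show ?thesis using ln_le_minus_one[OF \<open>w > 0\<close>] by (simp add: psi_def)
  next
    case False
    then have "0 < (real L - 2) * w ^ (L - 2)" using assms(1,2) by simp
    then have "psi L w \<le> 0" using False by (simp add: psi_def)
    then show ?thesis using \<open>w > 0\<close> by simp
  qed
  then show ?thesis using \<open>c \<ge> 0\<close> by (simp add: phi_def mult_left_mono)
qed

lemma half_sq_le_phi_diff:
  assumes "L \<ge> 2" "w > 0" "v \<ge> 0"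
  shows "(w - v)\<^sup>2 / 2 \<le> phi L (v ^ L) w - phi L (v ^ L) v"
proof (cases "v = 0")
  case True
  then show ?thesis using assms by (simp add: phi_def power_0_left)
next
  case False
  then have "v > 0" using assms by auto
  define g where "g s = phi L (v ^ L) s - (s - v)\<^sup>2 / 2" for s
  have g_deriv: "(g has_real_derivative v - v ^ L / s ^ (L - 1)) (at s)" if "s > 0" for s
    unfolding g_def[abs_def]
    by (auto intro!: derivative_eq_intros phi_deriv[OF assms(1) that] simp: field_simps)
  have g_cont: "continuous_on {a..b} g" if "a > 0" for a b
    using g_deriv that
    by (intro continuous_at_imp_continuous_on ballI) (metis DERIV_isCont atLeastAtMost_iff less_le_trans)
  have vL: "v ^ L = v * v ^ (L - 1)"
    using power_minus_mult[of L v] assms(1) by (simp add: mult.commute)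
  have "g v \<le> g w"
  proof (cases "v \<le> w")
    case True
    show ?thesis
    proof (rule DERIV_nonneg_imp_increasing_open[OF True _ g_cont[OF \<open>v > 0\<close>]])
      fix s assume s: "v < s" "s < w"
      then have "v ^ (L - 1) \<le> s ^ (L - 1)" using \<open>v > 0\<close> by (simp add: power_mono)
      then have "v ^ L / s ^ (L - 1) \<le> v" using s \<open>v > 0\<close> vL by (simp add: divide_le_eq mult_left_mono)
      then show "\<exists>d. (g has_real_derivative d) (at s) \<and> 0 \<le> d"
        using g_deriv[of s] s \<open>v > 0\<close> by (intro exI[of _ "v - v ^ L / s ^ (L - 1)"]) simp
    qed
  next
    case False
    show ?thesis
    proof (rule DERIV_nonpos_imp_decreasing_open[of w v, OF _ _ g_cont[OF \<open>w > 0\<close>]])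
      fix s assume s: "w < s" "s < v"
      then have "s ^ (L - 1) \<le> v ^ (L - 1)" using \<open>w > 0\<close> by (simp add: power_mono)
      then have "v \<le> v ^ L / s ^ (L - 1)" using s \<open>w > 0\<close> \<open>v > 0\<close> vL by (simp add: le_divide_eq mult_left_mono)
      then show "\<exists>d. (g has_real_derivative d) (at s) \<and> d \<le> 0"
        using g_deriv[of s] s \<open>w > 0\<close> by (intro exI[of _ "v - v ^ L / s ^ (L - 1)"]) simp
    qed (use False in simp)
  qed
  then show ?thesis by (simp add: g_def)
qed

lemma isCont_phi:
  assumes "L \<ge> 2" "v \<ge> 0"
  shows "isCont (phi L (v ^ L)) v"
proof (cases "v = 0")
  case True
  then have "phi L (v ^ L) = (\<lambda>w. w\<^sup>2 / 2)"
    using assms(1) by (simp add: phi_def power_0_left fun_eq_iff)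
  then show ?thesis by (simp add: continuous_intros)
next
  case False
  then show ?thesis using assms phi_deriv DERIV_isCont by (metis less_eq_real_def)
qed

section \<open>Non-negative least squares\<close>

lemma norm_sq_residual_expand:
  fixes A :: "real^'n^'m"
  shows "(norm (A *v z - y))\<^sup>2 = (norm (A *v x - y))\<^sup>2
    + 2 * ((transpose A *v (A *v x - y)) \<bullet> (z - x)) + (norm (A *v (z - x)))\<^sup>2"
proof -
  define e where "e = A *v x - y"
  define d where "d = A *v (z - x)"
  have "A *v z - y = e + d"
    by (simp add: e_def d_def matrix_vector_mult_diff_distrib)
  moreover have "e \<bullet> d = (transpose A *v e) \<bullet> (z - x)"
    by (simp add: d_def dot_lmul_matrix)
  ultimately show ?thesis
    unfolding e_def[symmetric] d_def[symmetric] using dot_norm[of e d] by simp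
qed

lemma NNLS_sol_variational_ineq:
  fixes A :: "real^'n^'m"
  assumes z: "z \<in> NNLS_sol A y" and w: "\<forall>i. 0 \<le> w $ i"
  shows "0 \<le> (transpose A *v (A *v z - y)) \<bullet> (w - z)"
proof -
  define g where "g = transpose A *v (A *v z - y)"
  define q where "q = (norm (A *v (w - z)))\<^sup>2"
  have "0 \<le> 2 * (g \<bullet> (w - z)) + s * q" if s: "0 < s" "s < 1" for s
  proof -
    have "\<forall>i. 0 \<le> (z + s *\<^sub>R (w - z)) $ i"
    proof
      fix i
      have "(z + s *\<^sub>R (w - z)) $ i = (1 - s) * z $ i + s * w $ i" by (simp add: algebra_simps)
      then show "0 \<le> (z + s *\<^sub>R (w - z)) $ i" using s z w by (simp add: NNLS_sol_def)
    qed
    then have "(norm (A *v z - y))\<^sup>2 \<le> (norm (A *v (z + s *\<^sub>R (w - z)) - y))\<^sup>2"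
      using z by (simp add: NNLS_sol_def)
    also have "\<dots> = (norm (A *v z - y))\<^sup>2 + 2 * (g \<bullet> (s *\<^sub>R (w - z))) + (norm (A *v (s *\<^sub>R (w - z))))\<^sup>2"
      using norm_sq_residual_expand[of A "z + s *\<^sub>R (w - z)" y z] by (simp add: g_def)
    also have "(norm (A *v (s *\<^sub>R (w - z))))\<^sup>2 = s\<^sup>2 * q"
      by (simp only: q_def matrix_vector_mult_scaleR norm_scaleR power_mult_distrib power2_abs)
    also have "(norm (A *v z - y))\<^sup>2 + 2 * (g \<bullet> (s *\<^sub>R (w - z))) + s\<^sup>2 * q
        = (norm (A *v z - y))\<^sup>2 + s * (2 * (g \<bullet> (w - z)) + s * q)"
      by (simp add: power2_eq_square algebra_simps)
    finally show ?thesis using s by (simp add: zero_le_mult_iff)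
  qed
  then have "\<forall>\<^sub>F s in at_right 0. 0 \<le> 2 * (g \<bullet> (w - z)) + s * q"
    by (auto simp: eventually_at_right_field intro!: exI[of _ 1])
  moreover have "((\<lambda>s. 2 * (g \<bullet> (w - z)) + s * q) \<longlongrightarrow> 2 * (g \<bullet> (w - z)) + 0 * q) (at_right 0)"
    by (intro tendsto_intros)
  ultimately have "0 \<le> 2 * (g \<bullet> (w - z))"
    using tendsto_lowerbound[of _ _ "at_right (0::real)"] by force
  then show ?thesis by (simp add: g_def)
qed

lemma NNLS_sol_residual_gap:
  fixes A :: "real^'n^'m"
  assumes "z \<in> NNLS_sol A y" and "\<forall>i. 0 \<le> w $ i"
  shows "(norm (A *v w - A *v z))\<^sup>2 \<le> (norm (A *v w - y))\<^sup>2 - (norm (A *v z - y))\<^sup>2"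
  using norm_sq_residual_expand[of A w y z] NNLS_sol_variational_ineq[OF assms]
  by (simp add: matrix_vector_mult_diff_distrib)

lemma sum_mem_convex_cone:
  assumes "convex_cone S" and "\<And>i. i \<in> I \<Longrightarrow> f i \<in> S"
  shows "sum f I \<in> S"
  using assms(2)
proof (induction I rule: infinite_finite_induct)
  case (insert i I)
  then show ?case using convex_cone_add[OF assms(1)] by simp
qed (use convex_cone_contains_0[OF assms(1)] in simp_all)

lemma nonneg_orthant_eq_convex_cone_hull:
  "{z :: real^'n. \<forall>i. 0 \<le> z $ i} = convex_cone hull range (\<lambda>i. axis i 1)"
proof
  show "{z :: real^'n. \<forall>i. 0 \<le> z $ i} \<subseteq> convex_cone hull range (\<lambda>i. axis i 1)"
  proof
    fix z :: "real^'n" assume "z \<in> {z. \<forall>i. 0 \<le> z $ i}"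
    have "z = (\<Sum>i\<in>UNIV. z $ i *\<^sub>R axis i 1)"
      using basis_expansion[of z] by (simp add: scalar_mult_eq_scaleR)
    also have "\<dots> \<in> convex_cone hull range (\<lambda>i. axis i 1)"
      using \<open>z \<in> _\<close>
      by (intro sum_mem_convex_cone convex_cone_convex_cone_hull convex_cone_hull_mul hull_inc) auto
    finally show "z \<in> convex_cone hull range (\<lambda>i. axis i 1)" .
  qed
  show "convex_cone hull range (\<lambda>i. axis i 1) \<subseteq> {z :: real^'n. \<forall>i. 0 \<le> z $ i}"
    by (rule hull_minimal) (auto simp: convex_cone_iff axis_def)
qed

lemma NNLS_sol_nonempty:
  fixes A :: "real^'n^'m"
  shows "NNLS_sol A y \<noteq> {}"
proof -
  define K where "K = (\<lambda>z. A *v z) ` {z. \<forall>i. 0 \<le> z $ i}"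
  have "K = convex_cone hull ((\<lambda>z. A *v z) ` range (\<lambda>i. axis i 1))"
    unfolding K_def nonneg_orthant_eq_convex_cone_hull
    by (simp add: convex_cone_hull_linear_image[OF matrix_vector_mul_linear])
  then have "closed K"
    by (simp add: closed_convex_cone_hull)
  moreover have "A *v 0 \<in> K" unfolding K_def by (rule imageI) simp
  then have "K \<noteq> {}" by blast
  ultimately obtain p where "p \<in> K" and p: "\<And>q. q \<in> K \<Longrightarrow> dist y p \<le> dist y q"
    using closest_point_exists[of K y] by metis
  then obtain z where z: "\<forall>i. 0 \<le> z $ i" "p = A *v z" by (auto simp: K_def)
  have "(norm (A *v z - y))\<^sup>2 \<le> (norm (A *v w - y))\<^sup>2" if "\<forall>i. 0 \<le> w $ i" for w
  proof -
    have "dist y p \<le> dist y (A *v w)" using that by (intro p) (auto simp: K_def)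
    then show ?thesis by (simp add: z dist_norm norm_minus_commute power_mono)
  qed
  then have "z \<in> NNLS_sol A y" using z by (simp add: NNLS_sol_def)
  then show ?thesis by blast
qed

section \<open>The balanced flow\<close>

text \<open>The common value \<open>u\<close> of all factors; \<open>xtilde\<close> is their Hadamard product \<open>u\<^sup>L\<close>.\<close>

locale balanced_flow =
  fixes L :: nat and A :: "real^'n^'m" and y :: "real^'m" and u :: "real \<Rightarrow> real^'n"
  assumes L_ge_2: "L \<ge> 2"
    and u_pos: "\<And>t i. 0 \<le> t \<Longrightarrow> 0 < u t $ i"
    and u_flow: "\<And>t i. 0 \<le> t \<Longrightarrow> ((\<lambda>t. u t $ i) has_real_derivative
          - (u t $ i ^ (L - 1) * (transpose A *v (A *v (\<chi> j. u t $ j ^ L) - y)) $ i)) (at t within {0..})"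
begin

definition xtilde :: "real \<Rightarrow> real^'n" where
  "xtilde t = (\<chi> i. u t $ i ^ L)"

definition grad :: "real \<Rightarrow> real^'n" where
  "grad t = transpose A *v (A *v xtilde t - y)"

abbreviation loss :: "real^'n \<Rightarrow> real" where
  "loss z \<equiv> (norm (A *v z - y))\<^sup>2"

definition lyapunov :: "real^'n \<Rightarrow> real \<Rightarrow> real" where
  "lyapunov z t = (\<Sum>i\<in>UNIV. phi L (z $ i) (u t $ i))"

lemma u_deriv:
  "0 \<le> t \<Longrightarrow> ((\<lambda>t. u t $ i) has_real_derivative - (u t $ i ^ (L - 1) * grad t $ i)) (at t within {0..})"
  using u_flow by (simp add: grad_def xtilde_def)

lemma xtilde_nonneg: "0 \<le> t \<Longrightarrow> 0 \<le> xtilde t $ i"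
  using u_pos by (simp add: xtilde_def less_imp_le)

lemma xtilde_deriv:
  assumes "0 \<le> t"
  shows "(xtilde has_vector_derivative (\<chi> i. - (real L * (u t $ i ^ (L - 1))\<^sup>2 * grad t $ i)))
    (at t within {0..})"
proof (rule has_vector_derivative_componentwise)
  fix i
  have "((\<lambda>t. u t $ i ^ L) has_real_derivative
      real L * u t $ i ^ (L - 1) * - (u t $ i ^ (L - 1) * grad t $ i)) (at t within {0..})"
    using DERIV_chain2[OF DERIV_pow u_deriv[OF assms, of i]] by simp
  then show "((\<lambda>t. xtilde t $ i) has_real_derivative
      (\<chi> i. - (real L * (u t $ i ^ (L - 1))\<^sup>2 * grad t $ i)) $ i) (at t within {0..})"
    by (simp add: xtilde_def power2_eq_square algebra_simps)
qed

lemma loss_deriv: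
  assumes "0 \<le> t"
  shows "((\<lambda>t. loss (xtilde t)) has_real_derivative
    - 2 * real L * (\<Sum>i\<in>UNIV. (u t $ i ^ (L - 1) * grad t $ i)\<^sup>2)) (at t within {0..})"
proof -
  define v where "v = (\<chi> i. - (real L * (u t $ i ^ (L - 1))\<^sup>2 * grad t $ i))"
  have "((\<lambda>z. (1/2) * loss z) has_derivative (\<lambda>h. h \<bullet> grad t)) (at (xtilde t))"
    using gderiv_least_squares[of A y "xtilde t"] by (simp add: gderiv_def grad_def)
  from has_derivative_compose[OF xtilde_deriv[OF assms, unfolded has_vector_derivative_def, folded v_def] this]
  have "((\<lambda>t. (1/2) * loss (xtilde t)) has_real_derivative v \<bullet> grad t) (at t within {0..})"
    by (simp add: has_field_derivative_def mult.commute[of _ "v \<bullet> grad t"])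
  from DERIV_cmult[OF this, of 2] show ?thesis
    by (simp add: v_def inner_vec_def power2_eq_square sum_distrib_left algebra_simps flip: sum_negf)
qed

lemma lyapunov_deriv:
  assumes "0 \<le> t"
  shows "((\<lambda>t. lyapunov z t) has_real_derivative grad t \<bullet> (z - xtilde t)) (at t within {0..})"
proof -
  have "((\<lambda>t. phi L (z $ i) (u t $ i)) has_real_derivative
      (u t $ i - z $ i / u t $ i ^ (L - 1)) * - (u t $ i ^ (L - 1) * grad t $ i)) (at t within {0..})" for i
    using DERIV_chain2[OF phi_deriv[OF L_ge_2 u_pos[OF assms]] u_deriv[OF assms]] .
  moreover have "(u t $ i - z $ i / u t $ i ^ (L - 1)) * - (u t $ i ^ (L - 1) * grad t $ i)
      = grad t $ i * (z $ i - xtilde t $ i)" for i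
    using u_pos[OF assms, of i] power_minus_mult[of L "u t $ i"] L_ge_2
    by (simp add: xtilde_def field_simps)
  ultimately show ?thesis
    unfolding lyapunov_def inner_vec_def by (intro DERIV_sum) auto
qed

lemma inner_grad_le_loss_diff: "2 * (grad t \<bullet> (z - xtilde t)) \<le> loss z - loss (xtilde t)"
  using norm_sq_residual_expand[of A z y "xtilde t"] by (simp add: grad_def)

lemma lyapunov_lower_bound:
  assumes "\<forall>i. 0 \<le> z $ i" and "0 \<le> t"
  shows "(norm (u t - z))\<^sup>2 - (norm z)\<^sup>2 \<le> 2 * lyapunov z t"
proof -
  have "((norm (u t - z))\<^sup>2 - (norm z)\<^sup>2) / 2 = (\<Sum>i\<in>UNIV. ((u t $ i - z $ i)\<^sup>2 - (z $ i)\<^sup>2) / 2)"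
    unfolding power2_norm_eq_inner inner_vec_def
    by (simp add: power2_eq_square sum_subtractf flip: sum_divide_distrib)
  also have "\<dots> = (\<Sum>i\<in>UNIV. (u t $ i)\<^sup>2 / 2 - z $ i * u t $ i)"
    by (rule sum.cong) (simp_all add: power2_eq_square field_simps)
  also have "\<dots> \<le> lyapunov z t"
    unfolding lyapunov_def using assms u_pos by (intro sum_mono phi_lower_bound L_ge_2) auto
  finally show ?thesis by simp
qed

lemma lyapunov_nonincreasing:
  assumes "z \<in> NNLS_sol A y" and "0 \<le> a" and "a \<le> b"
  shows "lyapunov z b \<le> lyapunov z a"
proof (rule DERIV_nonpos_imp_nonincreasing_within_halfline[OF lyapunov_deriv _ assms(2,3)])
  fix t assume "a < t"
  then have "loss z \<le> loss (xtilde t)"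
    using assms xtilde_nonneg by (simp add: NNLS_sol_def)
  then show "grad t \<bullet> (z - xtilde t) \<le> 0"
    using inner_grad_le_loss_diff[of t z] by linarith
qed

lemma loss_gap_le:
  assumes "\<forall>i. 0 \<le> z $ i" and "0 < t"
  shows "loss (xtilde t) - loss z \<le> (2 * lyapunov z 0 + (norm z)\<^sup>2) / t"
proof -
  \<comment> \<open>E decreases: the loss does, and the potential decreases at least at rate (loss - loss z)/2.\<close>
  define E where "E s = s * (loss (xtilde s) - loss z) + 2 * lyapunov z s" for s
  define E' where "E' s = 1 * (loss (xtilde s) - loss z)
    + (- 2 * real L * (\<Sum>i\<in>UNIV. (u s $ i ^ (L - 1) * grad s $ i)\<^sup>2) - 0) * s
    + 2 * (grad s \<bullet> (z - xtilde s))" for s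
  have "(E has_real_derivative E' s) (at s within {0..})" if "0 \<le> s" for s
    unfolding E_def[abs_def] E'_def
    by (intro DERIV_add DERIV_mult DERIV_ident DERIV_diff DERIV_const DERIV_cmult
        loss_deriv[OF that] lyapunov_deriv[OF that])
  moreover have "E' s \<le> 0" if "0 < s" for s
  proof -
    have "0 \<le> 2 * real L * (\<Sum>i\<in>UNIV. (u s $ i ^ (L - 1) * grad s $ i)\<^sup>2) * s"
      using that by (simp add: sum_nonneg)
    moreover have "E' s = loss (xtilde s) - loss z + 2 * (grad s \<bullet> (z - xtilde s))
        - 2 * real L * (\<Sum>i\<in>UNIV. (u s $ i ^ (L - 1) * grad s $ i)\<^sup>2) * s"
      by (simp add: E'_def)
    ultimately show ?thesis
      using inner_grad_le_loss_diff[of s z] by linarith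
  qed
  ultimately have "E t \<le> E 0"
    by (rule DERIV_nonpos_imp_nonincreasing_within_halfline) (use assms(2) in auto)
  moreover have "- (norm z)\<^sup>2 \<le> 2 * lyapunov z t"
    using lyapunov_lower_bound[OF assms(1) less_imp_le[OF assms(2)]] zero_le_power2[of "norm (u t - z)"]
    by linarith
  ultimately have "t * (loss (xtilde t) - loss z) \<le> 2 * lyapunov z 0 + (norm z)\<^sup>2"
    by (simp add: E_def)
  then show ?thesis
    using assms(2) by (simp add: pos_le_divide_eq mult.commute)
qed

lemma convergence_rate:
  "\<exists>C>0. \<forall>xp\<in>NNLS_sol A y. \<forall>t>0. (norm (A *v xtilde t - A *v xp))\<^sup>2 \<le> C / t"
proof -
  obtain z where z: "z \<in> NNLS_sol A y" using NNLS_sol_nonempty by blast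
  then have z_nonneg: "\<forall>i. 0 \<le> z $ i" by (simp add: NNLS_sol_def)
  define C where "C = 2 * lyapunov z 0 + (norm z)\<^sup>2"
  have "0 \<le> C"
    unfolding C_def using lyapunov_lower_bound[OF z_nonneg order_refl] zero_le_power2[of "norm (u 0 - z)"]
    by linarith
  have "(norm (A *v xtilde t - A *v xp))\<^sup>2 \<le> (C + 1) / t" if "xp \<in> NNLS_sol A y" "0 < t" for xp t
  proof -
    have "loss xp = loss z"
      using that(1) z by (auto simp: NNLS_sol_def intro: order.antisym)
    then have "(norm (A *v xtilde t - A *v xp))\<^sup>2 \<le> loss (xtilde t) - loss z"
      using NNLS_sol_residual_gap[OF that(1)] xtilde_nonneg that(2) by simp
    also have "\<dots> \<le> C / t"
      using loss_gap_le[OF z_nonneg that(2)] by (simp add: C_def)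
    also have "\<dots> \<le> (C + 1) / t"
      using that(2) by (simp add: divide_right_mono)
    finally show ?thesis .
  qed
  then show ?thesis
    using \<open>0 \<le> C\<close> by (intro exI[of _ "C + 1"]) auto
qed

lemma loss_tendsto_min:
  assumes "z \<in> NNLS_sol A y"
  shows "((\<lambda>t. loss (xtilde t)) \<longlongrightarrow> loss z) at_top"
proof (rule tendsto_sandwich)
  have z_nonneg: "\<forall>i. 0 \<le> z $ i" using assms by (simp add: NNLS_sol_def)
  define C where "C = 2 * lyapunov z 0 + (norm z)\<^sup>2"
  show "\<forall>\<^sub>F t in at_top. loss z \<le> loss (xtilde t)"
    using assms xtilde_nonneg by (auto simp: NNLS_sol_def eventually_at_top_linorder intro!: exI[of _ 0])
  show "\<forall>\<^sub>F t in at_top. loss (xtilde t) \<le> loss z + C / t"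
    using loss_gap_le[OF z_nonneg] unfolding C_def eventually_at_top_linorder
    by (intro exI[of _ 1]) (smt (verit))
  show "((\<lambda>t. loss z + C / t) \<longlongrightarrow> loss z) at_top"
    using tendsto_add[OF tendsto_const tendsto_divide_0[OF tendsto_const
        filterlim_at_top_imp_at_infinity[OF filterlim_ident]]] by simp
qed simp

lemma bounded_u: "bounded (u ` {0..})"
proof -
  obtain z where z: "z \<in> NNLS_sol A y" using NNLS_sol_nonempty by blast
  then have z_nonneg: "\<forall>i. 0 \<le> z $ i" by (simp add: NNLS_sol_def)
  have "dist z (u t) \<le> sqrt (2 * lyapunov z 0 + (norm z)\<^sup>2)" if "0 \<le> t" for t
  proof -
    have "(norm (u t - z))\<^sup>2 \<le> 2 * lyapunov z 0 + (norm z)\<^sup>2"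
      using lyapunov_lower_bound[OF z_nonneg that] lyapunov_nonincreasing[OF z order_refl that]
      by linarith
    then show ?thesis by (simp add: dist_norm norm_minus_commute real_le_rsqrt)
  qed
  then have "u ` {0..} \<subseteq> cball z (sqrt (2 * lyapunov z 0 + (norm z)\<^sup>2))" by auto
  then show ?thesis using bounded_cball bounded_subset by blast
qed

context
  fixes s :: "nat \<Rightarrow> real" and ub :: "real^'n"
  assumes s: "filterlim s at_top sequentially" and lim: "(\<lambda>n. u (s n)) \<longlonglongrightarrow> ub"
begin

lemma limit_point_nonneg: "0 \<le> ub $ i"
proof (rule tendsto_lowerbound[OF tendsto_vec_nth[OF lim]])
  have "\<forall>\<^sub>F n in sequentially. 0 \<le> s n"
    using s by (simp add: filterlim_at_top)
  then show "\<forall>\<^sub>F n in sequentially. 0 \<le> u (s n) $ i"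
    by (rule eventually_mono) (simp add: u_pos less_imp_le)
qed simp

lemma limit_point_in_NNLS_sol: "(\<chi> i. ub $ i ^ L) \<in> NNLS_sol A y"
proof -
  obtain z where z: "z \<in> NNLS_sol A y" using NNLS_sol_nonempty by blast
  have "(\<lambda>n. xtilde (s n)) \<longlonglongrightarrow> (\<chi> i. ub $ i ^ L)"
    unfolding xtilde_def by (intro tendsto_vec_lambda tendsto_power tendsto_vec_nth lim)
  then have "(\<lambda>n. loss (xtilde (s n))) \<longlonglongrightarrow> loss (\<chi> i. ub $ i ^ L)"
    by (intro tendsto_intros bounded_linear.tendsto[OF matrix_vector_mul_bounded_linear])
  moreover have "(\<lambda>n. loss (xtilde (s n))) \<longlonglongrightarrow> loss z"
    using filterlim_compose[OF loss_tendsto_min[OF z] s] .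
  ultimately have "loss (\<chi> i. ub $ i ^ L) = loss z"
    by (rule LIMSEQ_unique)
  then show ?thesis
    using z limit_point_nonneg by (simp add: NNLS_sol_def)
qed

lemma u_tendsto_limit_point: "(u \<longlongrightarrow> ub) at_top"
proof -
  define xb where "xb = (\<chi> i. ub $ i ^ L)"
  define D where "D = (\<Sum>i\<in>UNIV. phi L (xb $ i) (ub $ i))"
  have xb: "xb \<in> NNLS_sol A y" unfolding xb_def by (rule limit_point_in_NNLS_sol)
  have gap: "(norm (u t - ub))\<^sup>2 \<le> 2 * (lyapunov xb t - D)" if "0 \<le> t" for t
  proof -
    have "(norm (u t - ub))\<^sup>2 / 2 = (\<Sum>i\<in>UNIV. (u t $ i - ub $ i)\<^sup>2 / 2)"
      unfolding power2_norm_eq_inner inner_vec_def by (simp add: power2_eq_square sum_divide_distrib)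
    also have "\<dots> \<le> (\<Sum>i\<in>UNIV. phi L (ub $ i ^ L) (u t $ i) - phi L (ub $ i ^ L) (ub $ i))"
      using u_pos[OF that] limit_point_nonneg by (intro sum_mono half_sq_le_phi_diff L_ge_2) auto
    also have "\<dots> = lyapunov xb t - D"
      by (simp add: lyapunov_def D_def xb_def sum_subtractf)
    finally show ?thesis by (simp add: field_simps)
  qed
  have lyapunov_lim: "(\<lambda>n. lyapunov xb (s n)) \<longlonglongrightarrow> D"
    unfolding lyapunov_def D_def xb_def
    using isCont_phi[OF L_ge_2 limit_point_nonneg] tendsto_vec_nth[OF lim]
    by (intro tendsto_sum) (auto intro: isCont_tendsto_compose)
  have "(lyapunov xb \<longlongrightarrow> D) at_top"
  proof (rule tendsto_at_top_if_nonincreasing_subseq[OF lyapunov_nonincreasing[OF xb] _ s lyapunov_lim])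
    show "D \<le> lyapunov xb t" if "0 \<le> t" for t
      using gap[OF that] zero_le_power2[of "norm (u t - ub)"] by argo
  qed
  then have "((\<lambda>t. sqrt (2 * (lyapunov xb t - D))) \<longlongrightarrow> sqrt 0) at_top"
    by (intro tendsto_real_sqrt tendsto_mult_right_zero LIM_zero)
  then have "((\<lambda>t. sqrt (2 * (lyapunov xb t - D))) \<longlongrightarrow> 0) at_top"
    by simp
  moreover have "\<forall>\<^sub>F t in at_top. norm (u t - ub) \<le> sqrt (2 * (lyapunov xb t - D))"
    unfolding eventually_at_top_linorder using gap by (intro exI[of _ 0] allI impI real_le_rsqrt) simp
  ultimately have "((\<lambda>t. u t - ub) \<longlongrightarrow> 0) at_top"
    by (rule Lim_null_comparison[rotated])
  then show ?thesis
    by (rule LIM_zero_cancel)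
qed

end

theorem xtilde_tendsto_NNLS_sol: "\<exists>xinf. (xtilde \<longlongrightarrow> xinf) at_top \<and> xinf \<in> NNLS_sol A y"
proof -
  have "range (\<lambda>n. u (real n)) \<subseteq> u ` {0..}" by auto
  then have "bounded (range (\<lambda>n. u (real n)))"
    using bounded_u bounded_subset by blast
  then obtain \<sigma> ub where "strict_mono \<sigma>" and "((\<lambda>n. u (real n)) \<circ> \<sigma>) \<longlonglongrightarrow> ub"
    using bounded_imp_convergent_subsequence by blast
  then have lim: "(\<lambda>n. u (real (\<sigma> n))) \<longlonglongrightarrow> ub"
    by (simp add: comp_def)
  have s: "filterlim (\<lambda>n. real (\<sigma> n)) at_top sequentially"
    using filterlim_compose[OF filterlim_real_sequentially filterlim_subseq[OF \<open>strict_mono \<sigma>\<close>]] .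
  have "(xtilde \<longlongrightarrow> (\<chi> i. ub $ i ^ L)) at_top"
    unfolding xtilde_def[abs_def]
    by (intro tendsto_vec_lambda tendsto_power tendsto_vec_nth u_tendsto_limit_point[OF s lim])
  then show ?thesis
    using limit_point_in_NNLS_sol[OF s lim] by blast
qed

end

section \<open>The factorized gradient flow\<close>

lemma hadamard_prod_fun_upd:
  assumes "k \<in> {1..L}"
  shows "hadamard_prod L (X(k := z)) = (\<chi> i. z $ i * (\<Prod>j\<in>{1..L} - {k}. X j $ i))"
proof -
  have "(\<Prod>j\<in>{1..L}. (X(k := z)) j $ i) = z $ i * (\<Prod>j\<in>{1..L} - {k}. (X(k := z)) j $ i)" for i
    using assms by (simp add: prod.remove)
  moreover have "(\<Prod>j\<in>{1..L} - {k}. (X(k := z)) j $ i) = (\<Prod>j\<in>{1..L} - {k}. X j $ i)" for i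
    by (rule prod.cong) auto
  ultimately have "(\<Prod>j\<in>{1..L}. (X(k := z)) j $ i) = z $ i * (\<Prod>j\<in>{1..L} - {k}. X j $ i)" for i
    by simp
  then show ?thesis by (simp add: hadamard_prod_def vec_eq_iff)
qed

lemma hadamard_prod_nth:
  "k \<in> {1..L} \<Longrightarrow> hadamard_prod L X $ i = X k $ i * (\<Prod>j\<in>{1..L} - {k}. X j $ i)"
  using hadamard_prod_fun_upd[of k L X "X k"] by simp

lemma gderiv_least_squares_scaled:
  fixes A :: "real^'n^'m"
  shows "GDERIV (\<lambda>z. (1/2) * (norm (A *v (\<chi> i. z $ i * p i) - y))\<^sup>2) x
    :> (\<chi> i. p i * (transpose A *v (A *v (\<chi> i. x $ i * p i) - y)) $ i)"
proof -
  define B :: "real^'n^'m" where "B = (\<chi> r c. A $ r $ c * p c)"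
  have "A *v (\<chi> i. z $ i * p i) = B *v z" for z
    by (simp add: B_def vec_eq_iff matrix_vector_mult_def ac_simps)
  moreover have "transpose B *v w = (\<chi> i. p i * (transpose A *v w) $ i)" for w
    by (simp add: B_def vec_eq_iff matrix_vector_mult_def transpose_def sum_distrib_left algebra_simps)
  ultimately show ?thesis
    using gderiv_least_squares[of B y x] by simp
qed

locale factor_flow =
  fixes L :: nat and A :: "real^'n^'m" and y :: "real^'m" and x0 :: "real^'n"
    and xs :: "nat \<Rightarrow> real \<Rightarrow> real^'n"
  assumes L_ge_2: "L \<ge> 2"
    and x0_pos: "\<forall>i. 0 < x0 $ i"
    and init: "\<forall>k\<in>{1..L}. xs k 0 = x0"
    and gradient_flow: "\<forall>k\<in>{1..L}. \<forall>t\<ge>0. \<exists>g.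
           GDERIV (\<lambda>z. L_over L A y ((\<lambda>j. xs j t)(k := z))) (xs k t) :> g \<and>
           (xs k has_vector_derivative (- g)) (at t within {0..})"
begin

definition cofactor :: "nat \<Rightarrow> real \<Rightarrow> 'n \<Rightarrow> real" where
  "cofactor k t i = (\<Prod>j\<in>{1..L} - {k}. xs j t $ i)"

definition grad :: "real \<Rightarrow> real^'n" where
  "grad t = transpose A *v (A *v hadamard_prod L (\<lambda>j. xs j t) - y)"

lemma hadamard_prod_eq_cofactor:
  "k \<in> {1..L} \<Longrightarrow> hadamard_prod L (\<lambda>j. xs j t) $ i = xs k t $ i * cofactor k t i"
  unfolding cofactor_def by (rule hadamard_prod_nth)

lemma factor_deriv:
  assumes "k \<in> {1..L}" and "0 \<le> t"
  shows "((\<lambda>t. xs k t $ i) has_real_derivative - (cofactor k t i * grad t $ i)) (at t within {0..})"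
proof -
  obtain g where g: "GDERIV (\<lambda>z. L_over L A y ((\<lambda>j. xs j t)(k := z))) (xs k t) :> g"
    and flow: "(xs k has_vector_derivative - g) (at t within {0..})"
    using gradient_flow assms by blast
  have partial_loss: "(\<lambda>z. L_over L A y ((\<lambda>j. xs j t)(k := z)))
      = (\<lambda>z. (1/2) * (norm (A *v (\<chi> i. z $ i * cofactor k t i) - y))\<^sup>2)"
    by (simp add: L_over_def hadamard_prod_fun_upd[OF assms(1)] cofactor_def)
  have "(\<chi> i. xs k t $ i * cofactor k t i) = hadamard_prod L (\<lambda>j. xs j t)"
    by (simp add: vec_eq_iff hadamard_prod_eq_cofactor[OF assms(1)])
  then have "g = (\<chi> i. cofactor k t i * grad t $ i)"
    using gderiv_unique[OF g[unfolded partial_loss] gderiv_least_squares_scaled] by (simp add: grad_def)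
  then show ?thesis
    using has_vector_derivative_vec_nth[OF flow, of i] by simp
qed

lemma one_mem_factors: "1 \<in> {1..L}"
  using L_ge_2 by simp

lemma factor_sq_eq:
  assumes "k \<in> {1..L}" and "0 \<le> t"
  shows "(xs k t $ i)\<^sup>2 = (xs 1 t $ i)\<^sup>2"
proof -
  \<comment> \<open>Conservation law: d/dt (xs k t $ i)^2 = -2 (x~ t $ i) (grad t $ i) is the same for every k.\<close>
  define h where "h s = (xs k s $ i)\<^sup>2 - (xs 1 s $ i)\<^sup>2" for s
  have "(h has_real_derivative 0) (at s within {0..})" if "s \<in> {0..}" for s
  proof -
    have ring: "2 * a * - (b * c) = - 2 * c * (a * b)" for a b c :: real
      by (simp add: algebra_simps)
    have "(h has_real_derivative 2 * xs k s $ i * - (cofactor k s i * grad s $ i)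
        - 2 * xs 1 s $ i * - (cofactor 1 s i * grad s $ i)) (at s within {0..})"
      unfolding h_def[abs_def] using that assms(1) one_mem_factors
      by (auto intro!: derivative_eq_intros factor_deriv)
    moreover have "xs k s $ i * cofactor k s i = xs 1 s $ i * cofactor 1 s i"
      using hadamard_prod_eq_cofactor[OF assms(1)] hadamard_prod_eq_cofactor[OF one_mem_factors]
      by metis
    ultimately show ?thesis unfolding ring by simp
  qed
  then obtain c where "\<forall>s\<in>{0..}. h s = c"
    using has_field_derivative_zero_constant[of "{0..}" h] by auto
  then have "h t = h 0" using assms(2) by auto
  then show ?thesis using init assms(1) one_mem_factors by (simp add: h_def)
qed

lemma abs_cofactor:
  assumes "k \<in> {1..L}" and "0 \<le> t"
  shows "\<bar>cofactor k t i\<bar> = \<bar>xs k t $ i\<bar> ^ (L - 1)"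
proof -
  have "\<bar>cofactor k t i\<bar> = (\<Prod>j\<in>{1..L} - {k}. \<bar>xs k t $ i\<bar>)"
    unfolding cofactor_def abs_prod
  proof (rule prod.cong)
    fix j assume "j \<in> {1..L} - {k}"
    then show "\<bar>xs j t $ i\<bar> = \<bar>xs k t $ i\<bar>"
      using factor_sq_eq[of j t i] factor_sq_eq[OF assms, of i] assms(2) by (metis DiffD1 real_sqrt_abs)
  qed simp
  then show ?thesis using assms(1) by simp
qed

lemma continuous_on_factor: "k \<in> {1..L} \<Longrightarrow> continuous_on {0..} (\<lambda>t. xs k t $ i)"
  using factor_deriv by (intro DERIV_continuous_on) auto

lemma continuous_on_grad: "continuous_on {0..} (\<lambda>t. grad t $ i)"
  unfolding grad_def hadamard_prod_def
  by (intro continuous_intros continuous_on_vec_lambda continuous_on_prod continuous_on_factor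
      bounded_linear.continuous_on[OF matrix_vector_mul_bounded_linear]) auto

lemma factor_nonzero:
  assumes "k \<in> {1..L}" and "0 \<le> T"
  shows "xs k T $ i \<noteq> 0"
proof -
  define c where "c s = \<bar>xs k s $ i\<bar> ^ (L - 2) * \<bar>grad s $ i\<bar>" for s
  have "continuous_on {0..T} (\<lambda>s. xs k s $ i)" "continuous_on {0..T} (\<lambda>s. grad s $ i)"
    by (intro continuous_on_subset[OF continuous_on_factor[OF assms(1)]]
        continuous_on_subset[OF continuous_on_grad]; auto)+
  then have "continuous_on {0..T} c"
    unfolding c_def by (intro continuous_on_mult continuous_on_power continuous_on_rabs)
  then obtain K where K: "\<And>s. s \<in> {0..T} \<Longrightarrow> c s \<le> K"
    using continuous_attains_sup[of "{0..T}" c] assms(2) by fastforce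
  show ?thesis
  proof (rule nonzero_if_abs_deriv_le[OF factor_deriv[OF assms(1)]])
    fix s assume s: "0 \<le> s" "s \<le> T"
    have "\<bar>xs k s $ i\<bar> ^ (L - 1) = \<bar>xs k s $ i\<bar> * \<bar>xs k s $ i\<bar> ^ (L - 2)"
      using L_ge_2 by (simp flip: power_Suc add: Suc_diff_Suc numeral_2_eq_2)
    then have "\<bar>- (cofactor k s i * grad s $ i)\<bar> = \<bar>xs k s $ i\<bar> * c s"
      using abs_cofactor[OF assms(1) s(1)] by (simp add: c_def abs_mult)
    also have "\<dots> \<le> \<bar>xs k s $ i\<bar> * K"
      using K s by (intro mult_left_mono) auto
    also have "\<dots> = K * \<bar>xs k s $ i\<bar>"
      by (rule mult.commute)
    finally show "\<bar>- (cofactor k s i * grad s $ i)\<bar> \<le> K * \<bar>xs k s $ i\<bar>" .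
  qed (use init assms x0_pos[rule_format, of i] in auto)
qed

lemma factor_pos:
  assumes "k \<in> {1..L}" and "0 \<le> t"
  shows "0 < xs k t $ i"
proof (rule ccontr)
  assume "\<not> 0 < xs k t $ i"
  moreover have "0 < xs k 0 $ i" using init x0_pos assms(1) by simp
  moreover have "continuous_on {0..t} (\<lambda>s. xs k s $ i)"
    using continuous_on_factor[OF assms(1)] by (rule continuous_on_subset) auto
  ultimately obtain s where "0 \<le> s" "xs k s $ i = 0"
    using IVT2'[of "\<lambda>s. xs k s $ i" t 0 0] assms(2) by auto
  then show False using factor_nonzero[OF assms(1)] by blast
qed

lemma factor_eq:
  assumes "k \<in> {1..L}" and "0 \<le> t"
  shows "xs k t = xs 1 t"
  using factor_sq_eq[OF assms] factor_pos[OF assms] factor_pos[OF one_mem_factors assms(2)]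
  by (simp add: vec_eq_iff less_imp_le)

lemma hadamard_prod_eq_power:
  assumes "0 \<le> t"
  shows "hadamard_prod L (\<lambda>j. xs j t) = (\<chi> i. xs 1 t $ i ^ L)"
proof -
  have "(\<Prod>j\<in>{1..L}. xs j t $ i) = (\<Prod>j\<in>{1..L}. xs 1 t $ i)" for i
    by (rule prod.cong) (simp_all only: factor_eq[OF _ assms])
  then show ?thesis by (simp add: hadamard_prod_def)
qed

lemma cofactor_eq_power:
  assumes "0 \<le> t"
  shows "cofactor 1 t i = xs 1 t $ i ^ (L - 1)"
proof -
  have "cofactor 1 t i = (\<Prod>j\<in>{1..L} - {1}. xs 1 t $ i)"
    unfolding cofactor_def by (rule prod.cong) (auto simp only: factor_eq[OF _ assms] Diff_iff)
  then show ?thesis using one_mem_factors by simp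
qed

lemma balanced_flow_first_factor: "balanced_flow L A y (xs 1)"
proof
  show "L \<ge> 2" by (rule L_ge_2)
  show "0 < xs 1 t $ i" if "0 \<le> t" for t i
    using factor_pos[OF one_mem_factors that] .
  show "((\<lambda>t. xs 1 t $ i) has_real_derivative - (xs 1 t $ i ^ (L - 1)
      * (transpose A *v (A *v (\<chi> j. xs 1 t $ j ^ L) - y)) $ i)) (at t within {0..})" if "0 \<le> t" for t i
  proof -
    have "cofactor 1 t i * grad t $ i
        = xs 1 t $ i ^ (L - 1) * (transpose A *v (A *v (\<chi> j. xs 1 t $ j ^ L) - y)) $ i"
      by (simp only: grad_def hadamard_prod_eq_power[OF that] cofactor_eq_power[OF that])
    then show ?thesis using factor_deriv[OF one_mem_factors that, of i] by (simp only:)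
  qed
qed

end

theorem theorem1:
  fixes L :: nat and A :: "real^'n^'m" and y :: "real^'m" and x0 :: "real^'n"
    and xs :: "nat \<Rightarrow> real \<Rightarrow> real^'n"
  assumes "L \<ge> 2"
    and "\<forall>i. 0 < x0 $ i"
    and "\<forall>k\<in>{1..L}. xs k 0 = x0"
    and "\<forall>k\<in>{1..L}. \<forall>t\<ge>0. \<exists>g.
           GDERIV (\<lambda>z. L_over L A y ((\<lambda>j. xs j t)(k := z))) (xs k t) :> g \<and>
           (xs k has_vector_derivative (- g)) (at t within {0..})"
  shows "\<exists>xinf. ((\<lambda>t. hadamard_prod L (\<lambda>j. xs j t)) \<longlongrightarrow> xinf) at_top \<and>
           xinf \<in> NNLS_sol A y \<and>
           (\<exists>C>0. \<forall>xp\<in>NNLS_sol A y. \<forall>t>0.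
              (norm (A *v hadamard_prod L (\<lambda>j. xs j t) - A *v xp))\<^sup>2 \<le> C / t)"
proof -
  interpret F: factor_flow L A y x0 xs
    using assms by unfold_locales
  interpret B: balanced_flow L A y "xs 1"
    by (rule F.balanced_flow_first_factor)
  have xtilde_eq: "hadamard_prod L (\<lambda>j. xs j t) = B.xtilde t" if "0 \<le> t" for t
    using F.hadamard_prod_eq_power[OF that] by (simp only: B.xtilde_def)
  obtain xinf where lim: "(B.xtilde \<longlongrightarrow> xinf) at_top" and xinf: "xinf \<in> NNLS_sol A y"
    using B.xtilde_tendsto_NNLS_sol by blast
  have "\<forall>\<^sub>F t in at_top. B.xtilde t = hadamard_prod L (\<lambda>j. xs j t)"
    unfolding eventually_at_top_linorder using xtilde_eq by (intro exI[of _ 0]) simp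
  with lim have "((\<lambda>t. hadamard_prod L (\<lambda>j. xs j t)) \<longlongrightarrow> xinf) at_top"
    by (rule Lim_transform_eventually)
  moreover obtain C where "C > 0"
    and C: "\<And>xp t. xp \<in> NNLS_sol A y \<Longrightarrow> 0 < t \<Longrightarrow> (norm (A *v B.xtilde t - A *v xp))\<^sup>2 \<le> C / t"
    using B.convergence_rate by blast
  moreover have "(norm (A *v hadamard_prod L (\<lambda>j. xs j t) - A *v xp))\<^sup>2 \<le> C / t"
    if "xp \<in> NNLS_sol A y" "0 < t" for xp t
    using C[OF that] xtilde_eq[of t] that(2) by simp
  ultimately show ?thesis
    using xinf by blast
qed

end
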